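(* For any finite simple graph $G$ of order $n$ with $v_{even}(G)=2$, there is $f\in\mathrm{SEDF}^0(G)$ such that $f(G)\le n-1$; hence $\gamma_s'(G)\le n-1$.
   Context: For $f:E(G)\to\{1,-1\}$, $f(G)=\sum_{e\in E(G)}f(e)$ and $f(v)=\sum_{e\in E_G(v)}f(e)$, where $E_G(v)$ is the set of edges incident with $v$. $\mathrm{SEDF}^0(G)$ is the set of functions $f:E(G)\to\{1,-1\}$ such that (a) $f(v)\ge 0$ for all $v\in V(G)$, and (b) $f(u)+f(v)\ge 2$ for every edge $uv$ with $f(uv)=1$. A signed edge domination function (SEDF) is $f:E(G)\to\{1,-1\}$ with $\sum_{e'\in E_G(u)\cup E_G(v)}f(e')\ge1$ for every edge $uv$; $\gamma_s'(G)$ is the minimum of $f(G)$ over all SEDFs. $v_{even}(G)$ is the number of vertices of even degree in $G$. *)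

theory Defs
  imports Main
begin

definition simple_graph :: "'a set \<Rightarrow> 'a set set \<Rightarrow> bool" where
  "simple_graph V E \<longleftrightarrow> finite V \<and>
     E \<subseteq> {{u, v} | u v. u \<in> V \<and> v \<in> V \<and> u \<noteq> v}"

definition inc_edges :: "'a set set \<Rightarrow> 'a \<Rightarrow> 'a set set" where
  "inc_edges E v = {e \<in> E. v \<in> e}"

definition degree :: "'a set set \<Rightarrow> 'a \<Rightarrow> nat" where
  "degree E v = card (inc_edges E v)"

definition v_even :: "'a set \<Rightarrow> 'a set set \<Rightarrow> nat" where
  "v_even V E = card {v \<in> V. even (degree E v)}"

definition fG :: "'a set set \<Rightarrow> ('a set \<Rightarrow> int) \<Rightarrow> int" where
  "fG E f = (\<Sum>e\<in>E. f e)"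

definition fv :: "'a set set \<Rightarrow> ('a set \<Rightarrow> int) \<Rightarrow> 'a \<Rightarrow> int" where
  "fv E f v = (\<Sum>e\<in>inc_edges E v. f e)"

definition pm_one :: "'a set set \<Rightarrow> ('a set \<Rightarrow> int) \<Rightarrow> bool" where
  "pm_one E f \<longleftrightarrow> (\<forall>e\<in>E. f e = 1 \<or> f e = -1)"

definition SEDF0 :: "'a set \<Rightarrow> 'a set set \<Rightarrow> ('a set \<Rightarrow> int) set" where
  "SEDF0 V E = {f. pm_one E f \<and> (\<forall>v\<in>V. fv E f v \<ge> 0) \<and>
      (\<forall>u v. {u, v} \<in> E \<and> f {u, v} = 1 \<longrightarrow> fv E f u + fv E f v \<ge> 2)}"

definition is_SEDF :: "'a set set \<Rightarrow> ('a set \<Rightarrow> int) \<Rightarrow> bool" where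
  "is_SEDF E f \<longleftrightarrow> pm_one E f \<and>
     (\<forall>u v. {u, v} \<in> E \<longrightarrow> (\<Sum>e\<in>inc_edges E u \<union> inc_edges E v. f e) \<ge> 1)"

(* gamma_s'(G): minimum of f(G) over all SEDFs (the set of values is finite) *)
definition gamma_s' :: "'a set set \<Rightarrow> int" where
  "gamma_s' E = Min (fG E ` {f. is_SEDF E f})"

end

theory Submission
  imports Defs
begin

text \<open>
  The theorem follows from a stronger statement proved by induction on \<open>|V| + |E|\<close>. Call
  \<open>f : E \<rightarrow> {1, -1}\<close> good for vertices \<open>x\<close> and \<open>y\<close> if \<open>f(G) \<le> |V| - 1\<close>, \<open>f(w) \<ge> 0\<close> for
  all \<open>w\<close>, \<open>f(x) > 0\<close> unless \<open>x\<close> is isolated, and, in case \<open>f(y) = 0\<close>, every edge \<open>yz\<close> with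
  \<open>f(yz) = 1\<close> has \<open>f(z) \<ge> 2\<close>. As \<open>f(w)\<close> and \<open>deg w\<close> have the same parity, when \<open>x\<close> and \<open>y\<close>
  are the two vertices of even degree every other non-isolated vertex has \<open>f(w) \<ge> 1\<close>, so a good
  labelling lies in \<open>SEDF\<^sup>0(G)\<close>, and every function in \<open>SEDF\<^sup>0(G)\<close> is a signed edge
  dominating function.

  Good labellings exist for all \<open>x\<close> and \<open>y\<close>. Isolated vertices and leaves are deleted, a leaf
  edge getting the label \<open>1\<close>. In a graph of minimum degree two a good labelling of a smaller
  graph is extended across a path \<open>a - v - b\<close> labelled \<open>-1, 1\<close>: the loss at \<open>a\<close> is absorbed by
  making \<open>a\<close> the positive vertex of the smaller graph, and \<open>b\<close> becomes positive. With parity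
  this settles all cases except when \<open>x\<close> and \<open>y\<close> are distinct vertices and \<open>deg x\<close> is even.
  Then a neighbour \<open>v\<close> of \<open>x\<close> either admits a suitable path, or \<open>v\<close> can be deleted together
  with its edges and the edges joining \<open>y\<close> to common neighbours of \<open>v\<close> and \<open>y\<close>, or
  \<open>N(v) - {x} = N(y)\<close>. If the last case holds for two neighbours of \<open>x\<close>, they lie on a
  \<open>4\<close>-cycle through \<open>N(y)\<close> whose alternating labels change no vertex sum.
\<close>

section \<open>Simple graphs\<close>

definition neighbours :: "'a set set \<Rightarrow> 'a \<Rightarrow> 'a set" where
  "neighbours E v = {w. {v, w} \<in> E}"

lemma card_Diff_singleton_int:
  assumes "finite A" "x \<in> A"
  shows "int (card (A - {x})) = int (card A) - 1"
proof -
  have "0 < card A" using assms card_gt_0_iff by blast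
  then show ?thesis using assms by (simp add: card_Diff_singleton of_nat_diff Suc_le_eq)
qed

lemma simple_graph_finite: "simple_graph V E \<Longrightarrow> finite V"
  by (simp add: simple_graph_def)

lemma simple_graph_finite_edges: "simple_graph V E \<Longrightarrow> finite E"
  unfolding simple_graph_def by (auto intro: finite_subset[where B = "Pow V"])

lemma simple_graph_edgeE:
  assumes "simple_graph V E" "e \<in> E"
  obtains u w where "e = {u, w}" "u \<noteq> w" "u \<in> V" "w \<in> V"
  using assms unfolding simple_graph_def by blast

lemma simple_graph_edgeD:
  assumes "simple_graph V E" "{u, w} \<in> E"
  shows "u \<noteq> w" "u \<in> V" "w \<in> V"
  using simple_graph_edgeE[OF assms] by (metis doubleton_eq_iff)+

lemma simple_graph_Diff: "simple_graph V E \<Longrightarrow> simple_graph V (E - F)"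
  by (auto simp: simple_graph_def)

lemma simple_graph_delete_vertex:
  assumes "simple_graph V E" "inc_edges E v \<subseteq> F"
  shows "simple_graph (V - {v}) (E - F)"
  using assms unfolding simple_graph_def inc_edges_def by blast

lemma inc_edges_outside: "simple_graph V E \<Longrightarrow> w \<notin> V \<Longrightarrow> inc_edges E w = {}"
  by (auto simp: inc_edges_def elim: simple_graph_edgeE)

lemma degree_pos_imp_vertex: "simple_graph V E \<Longrightarrow> 0 < degree E w \<Longrightarrow> w \<in> V"
  using inc_edges_outside by (fastforce simp: degree_def)

lemma finite_inc_edges: "finite E \<Longrightarrow> finite (inc_edges E v)"
  by (simp add: inc_edges_def)

lemma degree_eq_0_iff: "finite E \<Longrightarrow> degree E v = 0 \<longleftrightarrow> inc_edges E v = {}"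
  by (simp add: degree_def finite_inc_edges)

lemma degree_pos_if_edge: "finite E \<Longrightarrow> e \<in> E \<Longrightarrow> w \<in> e \<Longrightarrow> 0 < degree E w"
  by (auto simp: degree_def card_gt_0_iff finite_inc_edges inc_edges_def)

lemma inc_edges_eq_image:
  assumes "simple_graph V E"
  shows "inc_edges E v = (\<lambda>w. {v, w}) ` neighbours E v"
proof
  show "inc_edges E v \<subseteq> (\<lambda>w. {v, w}) ` neighbours E v"
  proof
    fix e assume "e \<in> inc_edges E v"
    then have "e \<in> E" "v \<in> e" by (auto simp: inc_edges_def)
    then obtain w where "e = {v, w}"
      using assms by (elim simple_graph_edgeE) (auto simp: insert_commute)
    with \<open>e \<in> E\<close> show "e \<in> (\<lambda>w. {v, w}) ` neighbours E v" by (auto simp: neighbours_def)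
  qed
qed (auto simp: inc_edges_def neighbours_def)

lemma inj_on_doubleton: "inj_on (\<lambda>w. {v, w}) S"
  by (auto simp: inj_on_def doubleton_eq_iff)

lemma degree_eq_card_neighbours: "simple_graph V E \<Longrightarrow> degree E v = card (neighbours E v)"
  by (simp add: degree_def inc_edges_eq_image card_image[OF inj_on_doubleton])

lemma neighbours_subset: "simple_graph V E \<Longrightarrow> neighbours E v \<subseteq> V"
  by (auto simp: neighbours_def dest: simple_graph_edgeD)

lemma finite_neighbours: "simple_graph V E \<Longrightarrow> finite (neighbours E v)"
  by (meson finite_subset neighbours_subset simple_graph_finite)

lemma self_notin_neighbours: "simple_graph V E \<Longrightarrow> v \<notin> neighbours E v"
  unfolding neighbours_def using simple_graph_edgeD(1) by fastforce

lemma degree_pos_iff: "simple_graph V E \<Longrightarrow> 0 < degree E v \<longleftrightarrow> neighbours E v \<noteq> {}"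
  by (simp add: degree_eq_card_neighbours finite_neighbours card_gt_0_iff)

lemma degree_ge_2_other_neighbour:
  assumes "simple_graph V E" "2 \<le> degree E v"
  obtains a where "{v, a} \<in> E" "a \<noteq> b"
proof -
  have "\<not> neighbours E v \<subseteq> {b}"
    using assms card_mono[of "{b}" "neighbours E v"] by (auto simp: degree_eq_card_neighbours)
  then show thesis using that by (auto simp: neighbours_def)
qed

lemma inc_edges_degree_1:
  assumes "finite E" "{u, w} \<in> E" "degree E u = 1"
  shows "inc_edges E u = {{u, w}}"
proof -
  have "{u, w} \<in> inc_edges E u" using assms(2) by (simp add: inc_edges_def)
  with assms(3) show ?thesis unfolding degree_def by (metis card_1_singletonE singletonD)
qed

lemma degree_cases:
  assumes "simple_graph V E"
  obtains (isolated) u where "u \<in> V" "degree E u = 0"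
    | (leaf) u w where "{u, w} \<in> E" "degree E u = 1"
    | (min_degree) "\<forall>u\<in>V. 2 \<le> degree E u"
proof (cases "\<forall>u\<in>V. 2 \<le> degree E u")
  case False
  then obtain u where u: "u \<in> V" "degree E u < 2" by (auto simp: not_le)
  show thesis
  proof (cases "degree E u = 0")
    case False
    then obtain w where "{u, w} \<in> E" using degree_pos_iff[OF assms, of u] by (auto simp: neighbours_def)
    with u False that(2) show thesis by simp
  qed (use u that(1) in blast)
qed (use that(3) in blast)

lemma card_delete_vertex_less:
  "finite V \<Longrightarrow> finite E \<Longrightarrow> u \<in> V \<Longrightarrow> card (V - {u}) + card (E - F) < card V + card E"
  using card_Diff1_less[of V u] card_mono[of E "E - F"] by fastforce

lemma simple_graph_induct [consumes 2, case_names edgeless isolated leaf min_degree]: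
  assumes "simple_graph V E" "V \<noteq> {}"
    and edgeless: "\<And>V. finite V \<Longrightarrow> V \<noteq> {} \<Longrightarrow> P V {}"
    and isolated: "\<And>V E u. simple_graph V E \<Longrightarrow> u \<in> V \<Longrightarrow> degree E u = 0 \<Longrightarrow>
        P (V - {u}) E \<Longrightarrow> P V E"
    and leaf: "\<And>V E u w. simple_graph V E \<Longrightarrow> {u, w} \<in> E \<Longrightarrow> degree E u = 1 \<Longrightarrow>
        P (V - {u}) (E - {{u, w}}) \<Longrightarrow> P V E"
    and min_degree: "\<And>V E. simple_graph V E \<Longrightarrow> E \<noteq> {} \<Longrightarrow> \<forall>u\<in>V. 2 \<le> degree E u \<Longrightarrow>
        (\<And>V' E'. simple_graph V' E' \<Longrightarrow> V' \<noteq> {} \<Longrightarrow> card V' + card E' < card V + card E \<Longrightarrow>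
          P V' E') \<Longrightarrow> P V E"
  shows "P V E"
  using assms(1,2)
proof (induction "card V + card E" arbitrary: V E rule: less_induct)
  case less
  have sg: "simple_graph V E" by fact
  have fin: "finite V" "finite E" using sg simple_graph_finite simple_graph_finite_edges by auto
  show ?case
  proof (cases "E = {}")
    case True
    with fin less.prems show ?thesis by (simp add: edgeless)
  next
    case False
    then obtain p q where "{p, q} \<in> E" by (metis all_not_in_conv sg simple_graph_edgeE)
    then have pq: "p \<noteq> q" "p \<in> V" "q \<in> V" using simple_graph_edgeD[OF sg] by auto
    from sg show ?thesis
    proof (cases rule: degree_cases)
      case (isolated u)
      have "simple_graph (V - {u}) E"
        using simple_graph_delete_vertex[OF sg, of u "{}"] isolated(2) fin(2) by (simp add: degree_eq_0_iff)
      moreover have "V - {u} \<noteq> {}" using pq by auto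
      ultimately have "P (V - {u}) E"
        using less.hyps card_delete_vertex_less[OF fin isolated(1), of "{}"] by simp
      then show ?thesis using assms(4)[OF sg isolated] by blast
    next
      case (leaf u w)
      have "simple_graph (V - {u}) (E - {{u, w}})"
        using simple_graph_delete_vertex[OF sg] inc_edges_degree_1[OF fin(2) leaf] by simp
      moreover have "u \<in> V" "V - {u} \<noteq> {}" using simple_graph_edgeD[OF sg leaf(1)] by auto
      ultimately have "P (V - {u}) (E - {{u, w}})" using less.hyps card_delete_vertex_less[OF fin] by simp
      then show ?thesis using assms(5)[OF sg leaf] by blast
    next
      case min_degree
      then show ?thesis using less sg False by (blast intro: assms(6))
    qed
  qed
qed

section \<open>Vertex sums of edge labellings\<close>

lemma fv_empty [simp]: "fv {} g w = 0"
  by (simp add: fv_def inc_edges_def)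

lemma fv_insert [simp]:
  assumes "finite F" "e \<notin> F"
  shows "fv (insert e F) g w = (if w \<in> e then g e else 0) + fv F g w"
proof -
  have "inc_edges (insert e F) w = (if w \<in> e then insert e (inc_edges F w) else inc_edges F w)"
    by (auto simp: inc_edges_def)
  moreover have "e \<notin> inc_edges F w" using \<open>e \<notin> F\<close> by (simp add: inc_edges_def)
  ultimately show ?thesis using \<open>finite F\<close> by (simp add: fv_def finite_inc_edges)
qed

lemma degree_eq_fv: "int (degree E w) = fv E (\<lambda>_. 1) w"
  by (simp add: degree_def fv_def)

lemma fv_Un:
  assumes "finite A" "finite B" "A \<inter> B = {}"
  shows "fv (A \<union> B) g w = fv A g w + fv B g w"
proof -
  have "inc_edges (A \<union> B) w = inc_edges A w \<union> inc_edges B w" by (auto simp: inc_edges_def)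
  moreover have "inc_edges A w \<inter> inc_edges B w = {}" using assms(3) by (auto simp: inc_edges_def)
  ultimately show ?thesis
    using assms(1,2) unfolding fv_def by (simp add: sum.union_disjoint finite_inc_edges)
qed

lemma fv_Diff:
  assumes "finite E" "F \<subseteq> E"
  shows "fv E g w = fv (E - F) g w + fv F g w"
proof -
  have "E = (E - F) \<union> F" using assms(2) by blast
  then show ?thesis using fv_Un[of "E - F" F g w] assms by (metis Diff_disjoint Int_commute finite_Diff finite_subset)
qed

lemma fv_override_on:
  assumes "finite E" "F \<subseteq> E"
  shows "fv E (override_on f g F) w = fv (E - F) f w + fv F g w"
proof -
  have "fv (E - F) (override_on f g F) w = fv (E - F) f w"
    unfolding fv_def by (rule sum.cong) (auto simp: inc_edges_def)
  moreover have "fv F (override_on f g F) w = fv F g w"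
    unfolding fv_def by (rule sum.cong) (auto simp: inc_edges_def)
  ultimately show ?thesis using fv_Diff[OF assms] by simp
qed

lemma fG_override_on:
  assumes "finite E" "F \<subseteq> E"
  shows "fG E (override_on f g F) = fG (E - F) f + fG F g"
proof -
  have "fG E (override_on f g F) = (\<Sum>e\<in>E - F. override_on f g F e) + (\<Sum>e\<in>F. override_on f g F e)"
    using assms by (simp add: fG_def sum.subset_diff finite_subset)
  then show ?thesis by (simp add: fG_def)
qed

lemma degree_Diff:
  assumes "finite E" "F \<subseteq> E"
  shows "int (degree E w) = int (degree (E - F) w) + fv F (\<lambda>_. 1) w"
  using fv_Diff[OF assms, of "\<lambda>_. 1" w] by (simp add: degree_eq_fv)

lemma pm_one_override_on: "pm_one (E - F) f \<Longrightarrow> pm_one F g \<Longrightarrow> pm_one E (override_on f g F)"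
  by (auto simp: pm_one_def override_on_def)

lemma fv_fan:
  assumes "finite S" "c \<notin> S"
  shows "fv ((\<lambda>u. {c, u}) ` S) g w =
    (if w = c then (\<Sum>u\<in>S. g {c, u}) else if w \<in> S then g {c, w} else 0)"
  using assms
proof (induction S rule: finite_induct)
  case (insert a S)
  have "{c, a} \<notin> (\<lambda>u. {c, u}) ` S" using insert.hyps(2) by (auto simp: doubleton_eq_iff)
  with insert show ?case by auto
qed simp

lemma sum_pm_one_parity:
  assumes "finite S" "\<forall>e\<in>S. f e = 1 \<or> f e = (-1::int)"
  shows "even (sum f S + int (card S))"
  using assms by (induction S rule: finite_induct) auto

lemma fv_degree_parity: "finite E \<Longrightarrow> pm_one E f \<Longrightarrow> even (fv E f w + int (degree E w))"
  unfolding fv_def degree_def pm_one_def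
  by (rule sum_pm_one_parity) (auto simp: finite_inc_edges inc_edges_def)

lemma fv_pos_if_odd_degree:
  "finite E \<Longrightarrow> pm_one E f \<Longrightarrow> odd (degree E w) \<Longrightarrow> 0 \<le> fv E f w \<Longrightarrow> 0 < fv E f w"
  using fv_degree_parity[of E f w] by (cases "fv E f w = 0") auto

lemma SEDF0_imp_is_SEDF:
  assumes sg: "simple_graph V E" and f: "f \<in> SEDF0 V E"
  shows "is_SEDF E f"
  unfolding is_SEDF_def
proof (intro conjI allI impI)
  show pm: "pm_one E f" using f by (simp add: SEDF0_def)
  fix u v assume uv: "{u, v} \<in> E"
  have fin: "finite (inc_edges E u)" "finite (inc_edges E v)"
    using simple_graph_finite_edges[OF sg] by (simp_all add: finite_inc_edges)
  have "inc_edges E u \<inter> inc_edges E v = {{u, v}}"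
  proof (intro equalityI subsetI)
    fix d assume "d \<in> inc_edges E u \<inter> inc_edges E v"
    then have "d \<in> E" "u \<in> d" "v \<in> d" by (auto simp: inc_edges_def)
    with sg simple_graph_edgeD(1)[OF sg uv] show "d \<in> {{u, v}}" by (elim simple_graph_edgeE) auto
  qed (use uv in \<open>auto simp: inc_edges_def\<close>)
  then have "(\<Sum>e\<in>inc_edges E u \<union> inc_edges E v. f e) = fv E f u + fv E f v - f {u, v}"
    unfolding fv_def using sum_Un[OF fin, of f] by simp
  moreover have "f {u, v} = 1 \<or> f {u, v} = -1" using pm uv by (simp add: pm_one_def)
  moreover have "f {u, v} = 1 \<longrightarrow> 2 \<le> fv E f u + fv E f v"
    and "0 \<le> fv E f u" "0 \<le> fv E f v"
    using f uv simple_graph_edgeD[OF sg uv] by (auto simp: SEDF0_def)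
  ultimately show "1 \<le> (\<Sum>e\<in>inc_edges E u \<union> inc_edges E v. f e)" by auto
qed

lemma gamma_s'_le:
  assumes "finite E" "is_SEDF E f"
  shows "gamma_s' E \<le> fG E f"
proof -
  have "fG E g \<in> {- int (card E) .. int (card E)}" if "pm_one E g" for g
  proof -
    have "\<forall>e\<in>E. - 1 \<le> g e \<and> g e \<le> 1" using that by (auto simp: pm_one_def)
    then show ?thesis
      using sum_bounded_above[of E g 1] sum_bounded_below[of E "-1" g] by (simp add: fG_def)
  qed
  then have "fG E ` {g. is_SEDF E g} \<subseteq> {- int (card E) .. int (card E)}"
    by (auto simp: is_SEDF_def)
  then have "finite (fG E ` {g. is_SEDF E g})" by (rule finite_subset) simp
  then show ?thesis using assms(2) unfolding gamma_s'_def by simp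
qed

section \<open>Good labellings\<close>

definition good_labelling :: "'a set \<Rightarrow> 'a set set \<Rightarrow> 'a \<Rightarrow> 'a \<Rightarrow> ('a set \<Rightarrow> int) \<Rightarrow> bool" where
  "good_labelling V E x y f \<longleftrightarrow> pm_one E f \<and> (\<forall>w. 0 \<le> fv E f w) \<and>
     (0 < degree E x \<longrightarrow> 0 < fv E f x) \<and>
     (fv E f y = 0 \<longrightarrow> (\<forall>z. {y, z} \<in> E \<longrightarrow> f {y, z} = 1 \<longrightarrow> 2 \<le> fv E f z)) \<and>
     fG E f \<le> int (card V) - 1"

lemma good_labelling_if_positive:
  assumes "finite E" "pm_one E f" "\<forall>w. 0 \<le> fv E f w" "fG E f \<le> int (card V) - 1"
    and "\<And>w. w \<in> {x, y} \<Longrightarrow> 0 < degree E w \<Longrightarrow> 0 < fv E f w"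
  shows "good_labelling V E x y f"
proof -
  have "{y, z} \<notin> E" if "fv E f y = 0" for z
    using that assms(5)[of y] degree_pos_if_edge[OF assms(1), of "{y, z}" y] by auto
  then show ?thesis using assms by (auto simp: good_labelling_def)
qed

lemma good_labelling_pos:
  assumes sg: "simple_graph V E" and odd: "\<forall>w\<in>V - {x, y}. odd (degree E w)"
    and f: "good_labelling V E x y f" and "{t, z} \<in> E" "t \<noteq> y"
  shows "0 < fv E f t"
proof -
  have fin: "finite E" by (rule simple_graph_finite_edges[OF sg])
  have "0 < degree E t" "t \<in> V"
    using degree_pos_if_edge[OF fin assms(4)] simple_graph_edgeD[OF sg assms(4)] by simp_all
  then show ?thesis
    using f odd \<open>t \<noteq> y\<close> fv_pos_if_odd_degree[OF fin]
    by (cases "t = x") (auto simp: good_labelling_def)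
qed

lemma good_labelling_SEDF0:
  assumes sg: "simple_graph V E" and odd: "\<forall>w\<in>V - {x, y}. odd (degree E w)"
    and f: "good_labelling V E x y f"
  shows "f \<in> SEDF0 V E"
proof -
  note pos = good_labelling_pos[OF sg odd f]
  have nonneg: "0 \<le> fv E f w" for w using f by (simp add: good_labelling_def)
  have at_y: "2 \<le> fv E f y + fv E f z" if "{y, z} \<in> E" "f {y, z} = 1" for z
  proof (cases "fv E f y = 0")
    case True
    then show ?thesis using f that by (auto simp: good_labelling_def)
  next
    case False
    have "z \<noteq> y" using simple_graph_edgeD(1)[OF sg that(1)] by simp
    then have "0 < fv E f z" using pos[of z y] that(1) by (simp add: insert_commute)
    with False nonneg[of y] show ?thesis by linarith
  qed
  have "2 \<le> fv E f u + fv E f w" if "{u, w} \<in> E" "f {u, w} = 1" for u w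
  proof (cases "y \<in> {u, w}")
    case True
    then show ?thesis using at_y[of u] at_y[of w] that by (auto simp: insert_commute)
  next
    case False
    then have "0 < fv E f u" "0 < fv E f w" using pos[of u w] pos[of w u] that by (auto simp: insert_commute)
    then show ?thesis by simp
  qed
  then show ?thesis using f nonneg by (simp add: SEDF0_def good_labelling_def)
qed

lemma good_labelling_edgeless: "finite V \<Longrightarrow> V \<noteq> {} \<Longrightarrow> good_labelling V {} x y (\<lambda>_. 1)"
  by (simp add: good_labelling_def pm_one_def degree_def inc_edges_def fG_def Suc_le_eq card_gt_0_iff)

lemma good_labelling_isolated:
  assumes "simple_graph V E" "u \<in> V" "good_labelling (V - {u}) E x y f"
  shows "good_labelling V E x y f"
  using assms card_Diff_singleton_int[OF simple_graph_finite[OF assms(1)] assms(2)]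
  by (auto simp: good_labelling_def)

lemma good_labelling_leaf:
  assumes sg: "simple_graph V E" and uw: "{u, w} \<in> E"
    and f: "good_labelling (V - {u}) (E - {{u, w}}) x y f"
  shows "good_labelling V E x y (override_on f (\<lambda>_. 1) {{u, w}})"
proof -
  let ?E = "E - {{u, w}}" and ?f = "override_on f (\<lambda>_. 1) {{u, w}}"
  have fin: "finite E" by (rule simple_graph_finite_edges[OF sg])
  have sub: "{{u, w}} \<subseteq> E" using uw by simp
  have fv: "fv E ?f t = fv ?E f t + (if t \<in> {u, w} then 1 else 0)" for t
    using fv_override_on[OF fin sub] by simp
  have deg: "int (degree E t) = int (degree ?E t) + (if t \<in> {u, w} then 1 else 0)" for t
    using degree_Diff[OF fin sub] by simp
  have nonneg: "0 \<le> fv ?E f t" for t using f by (simp add: good_labelling_def)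
  have soft: "2 \<le> fv E ?f z" if "fv E ?f y = 0" "{y, z} \<in> E" "?f {y, z} = 1" for z
  proof -
    have "y \<notin> {u, w}" using that(1) fv[of y] nonneg[of y] by auto
    then have "{y, z} \<in> ?E" "f {y, z} = 1" "fv ?E f y = 0"
      using that fv[of y] by (auto simp: doubleton_eq_iff)
    then show ?thesis using f fv[of z] by (auto simp: good_labelling_def)
  qed
  show ?thesis unfolding good_labelling_def
  proof (intro conjI allI impI)
    show "pm_one E ?f" using f by (intro pm_one_override_on) (auto simp: good_labelling_def pm_one_def)
    show "0 \<le> fv E ?f t" for t using fv[of t] nonneg[of t] by simp
    show "0 < fv E ?f x" if "0 < degree E x"
      using that f fv[of x] deg[of x] nonneg[of x] by (cases "x \<in> {u, w}") (auto simp: good_labelling_def)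
    show "fG E ?f \<le> int (card V) - 1"
      using f fG_override_on[OF fin sub] simple_graph_edgeD(2)[OF sg uw]
        card_Diff_singleton_int[OF simple_graph_finite[OF sg]]
      by (simp add: good_labelling_def fG_def)
  qed (use soft in blast)
qed

section \<open>Extending good labellings in graphs of minimum degree two\<close>

lemma path_relabelling:
  assumes sg: "simple_graph V E" and va: "{v, a} \<in> E" and vb: "{v, b} \<in> E" and "a \<noteq> b"
    and da: "2 \<le> degree E a" and f: "good_labelling V (E - {{v, a}, {v, b}}) a y f"
  defines "f' \<equiv> override_on f (\<lambda>e. if e = {v, b} then 1 else -1) {{v, a}, {v, b}}"
  shows "pm_one E f'" "\<forall>w. 0 \<le> fv E f' w" "fG E f' \<le> int (card V) - 1"
    and "fv E f' w = fv (E - {{v, a}, {v, b}}) f w + (if w = b then 1 else if w = a then -1 else 0)"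
    and "int (degree E w) = int (degree (E - {{v, a}, {v, b}}) w) +
      (if w = v then 2 else if w \<in> {a, b} then 1 else 0)"
proof -
  let ?F = "{{v, a}, {v, b}}" and ?g = "\<lambda>e. if e = {v, b} then 1 else (-1::int)"
  have fin: "finite E" by (rule simple_graph_finite_edges[OF sg])
  have sub: "?F \<subseteq> E" using va vb by simp
  have "v \<noteq> a" "v \<noteq> b" using simple_graph_edgeD[OF sg va] simple_graph_edgeD[OF sg vb] by auto
  with \<open>a \<noteq> b\<close> have ne: "{v, a} \<noteq> {v, b}" and dist: "a \<noteq> v" "b \<noteq> v" "a \<noteq> b"
    by (auto simp: doubleton_eq_iff)
  have fv: "fv E f' w = fv (E - ?F) f w + (if w = b then 1 else if w = a then -1 else 0)" for w
    unfolding f'_def using fv_override_on[OF fin sub, of f ?g w] ne dist by auto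
  then show "fv E f' w = fv (E - ?F) f w + (if w = b then 1 else if w = a then -1 else 0)" .
  show deg: "int (degree E w) = int (degree (E - ?F) w) + (if w = v then 2 else if w \<in> {a, b} then 1 else 0)"
    for w
    using degree_Diff[OF fin sub, of w] ne dist by auto
  have "0 < fv (E - ?F) f a" using f deg[of a] da dist by (simp add: good_labelling_def)
  then show "\<forall>w. 0 \<le> fv E f' w" using f fv by (simp add: good_labelling_def)
  show "pm_one E f'" unfolding f'_def
    using f by (intro pm_one_override_on) (auto simp: good_labelling_def pm_one_def)
  show "fG E f' \<le> int (card V) - 1"
    unfolding f'_def using f fG_override_on[OF fin sub, of f ?g] ne by (simp add: good_labelling_def fG_def)
qed

lemma good_labelling_odd_except:
  assumes sg: "simple_graph V E" and md: "\<forall>u\<in>V. 2 \<le> degree E u" and "b \<in> V"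
    and IH: "\<And>F s. F \<subseteq> E \<Longrightarrow> F \<noteq> {} \<Longrightarrow> \<exists>f. good_labelling V (E - F) s s f"
    and odd: "\<And>w. w \<in> {x, y} \<Longrightarrow> w \<in> V \<Longrightarrow> w \<noteq> b \<Longrightarrow> odd (degree E w)"
  shows "\<exists>f. good_labelling V E x y f"
proof -
  have fin: "finite E" by (rule simple_graph_finite_edges[OF sg])
  have "neighbours E b \<noteq> {}" using md \<open>b \<in> V\<close> degree_pos_iff[OF sg, of b] by auto
  then obtain v where vb: "{v, b} \<in> E" by (auto simp: neighbours_def insert_commute)
  then have "v \<in> V" using simple_graph_edgeD[OF sg] by blast
  then obtain a where va: "{v, a} \<in> E" "a \<noteq> b"
    using md degree_ge_2_other_neighbour[OF sg, of v b] by blast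
  then have "2 \<le> degree E a" using md simple_graph_edgeD[OF sg] by blast
  obtain f where f: "good_labelling V (E - {{v, a}, {v, b}}) a a f"
    using IH[of "{{v, a}, {v, b}}"] va vb by auto
  note R = path_relabelling[OF sg va(1) vb va(2) \<open>2 \<le> degree E a\<close> f]
  let ?f = "override_on f (\<lambda>e. if e = {v, b} then 1 else -1) {{v, a}, {v, b}}"
  have "0 < fv E ?f w" if "w \<in> {x, y}" "0 < degree E w" for w
  proof (cases "w = b")
    case True
    have "0 \<le> fv (E - {{v, a}, {v, b}}) f b" using f by (simp add: good_labelling_def)
    then show ?thesis using R(4)[of b] True by simp
  next
    case False
    have "w \<in> V" using that(2) by (rule degree_pos_imp_vertex[OF sg])
    then show ?thesis using fv_pos_if_odd_degree[OF fin R(1)] odd[OF that(1) _ False] R(2) by blast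
  qed
  then show ?thesis using good_labelling_if_positive[OF fin R(1-3)] by blast
qed

lemma good_labelling_path:
  assumes sg: "simple_graph V E" and vp: "{v, p} \<in> E" and vm: "{v, m} \<in> E" and "p \<noteq> m"
    and "2 \<le> degree E m" and "even (degree E p)" and y: "y = v \<or> (y \<notin> {v, p, m} \<and> {y, m} \<notin> E)"
    and f: "good_labelling V (E - {{v, m}, {v, p}}) m y f"
  shows "good_labelling V E p y (override_on f (\<lambda>e. if e = {v, p} then 1 else -1) {{v, m}, {v, p}})"
    (is "good_labelling V E p y ?f")
proof -
  let ?F = "{{v, m}, {v, p}}" and ?E = "E - {{v, m}, {v, p}}"
  have fin: "finite E" by (rule simple_graph_finite_edges[OF sg])
  note R = path_relabelling[OF sg vm vp \<open>p \<noteq> m\<close>[symmetric] \<open>2 \<le> degree E m\<close> f]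
  have "v \<noteq> p" "v \<noteq> m" using simple_graph_edgeD[OF sg vp] simple_graph_edgeD[OF sg vm] by simp_all
  have fv_mono: "fv ?E f w \<le> fv E ?f w" if "w \<noteq> m" for w using R(4)[of w] that by simp
  have "odd (degree ?E p)" using R(5)[of p] \<open>even (degree E p)\<close> \<open>v \<noteq> p\<close> by simp presburger
  then have "0 < fv ?E f p"
    using f fv_pos_if_odd_degree[of ?E f p] fin by (simp add: good_labelling_def)
  then have p2: "2 \<le> fv E ?f p" using R(4)[of p] by simp
  have soft: "2 \<le> fv E ?f z" if "fv E ?f y = 0" "{y, z} \<in> E" "?f {y, z} = 1" for z
  proof (cases "{y, z} \<in> ?F")
    case True
    with that(3) have "{y, z} = {v, p}" by (auto split: if_splits)
    with y \<open>v \<noteq> p\<close> show ?thesis using p2 by (auto simp: doubleton_eq_iff)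
  next
    case False
    have "y \<noteq> p" "y \<noteq> m" using y \<open>v \<noteq> p\<close> \<open>v \<noteq> m\<close> by auto
    then have "fv ?E f y = 0" using R(4)[of y] that(1) by simp
    moreover have "{y, z} \<in> ?E" "f {y, z} = 1" using False that(2,3) by auto
    moreover have "z \<noteq> m" using y False that(2) by auto
    ultimately show ?thesis using f fv_mono[of z] by (fastforce simp: good_labelling_def)
  qed
  show ?thesis using R(1-3) p2 soft by (simp add: good_labelling_def)
qed

lemma good_labelling_degree_two:
  assumes sg: "simple_graph V E" and vx: "{v, x} \<in> E" and vy: "{v, y} \<in> E" and yz: "{y, z} \<in> E"
    and neq: "z \<noteq> v" "z \<noteq> x" "x \<noteq> y" and "2 \<le> degree E z"
    and f: "good_labelling (V - {v}) (E - {{v, x}, {v, y}, {y, z}}) z y f"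
  shows "good_labelling V E x y (override_on f (\<lambda>e. if e = {y, z} then -1 else 1) {{v, x}, {v, y}, {y, z}})"
    (is "good_labelling V E x y ?f")
proof -
  let ?F = "{{v, x}, {v, y}, {y, z}}" and ?E = "E - {{v, x}, {v, y}, {y, z}}"
    and ?g = "\<lambda>e. if e = {y, z} then -1 else (1::int)"
  have fin: "finite E" by (rule simple_graph_finite_edges[OF sg])
  have sub: "?F \<subseteq> E" using vx vy yz by simp
  have dist: "v \<noteq> x" "v \<noteq> y" "y \<noteq> z" "z \<noteq> v" "z \<noteq> x" "x \<noteq> y"
    using simple_graph_edgeD(1)[OF sg] vx vy yz neq by blast+
  then have ne: "{v, x} \<noteq> {v, y}" "{v, x} \<noteq> {y, z}" "{v, y} \<noteq> {y, z}" by (auto simp: doubleton_eq_iff)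
  have fv: "fv E ?f t = fv ?E f t + (if t = v then 2 else if t = x then 1 else if t = z then -1 else 0)"
    for t using fv_override_on[OF fin sub, of f ?g t] ne dist by auto
  have "int (degree E z) = int (degree ?E z) + 1" using degree_Diff[OF fin sub, of z] ne dist by auto
  then have "0 < fv ?E f z" using f \<open>2 \<le> degree E z\<close> by (simp add: good_labelling_def)
  then have nonneg: "0 \<le> fv E ?f t" for t using f fv[of t] by (auto simp: good_labelling_def)
  have soft: "2 \<le> fv E ?f t" if "fv E ?f y = 0" "{y, t} \<in> E" "?f {y, t} = 1" for t
  proof (cases "{y, t} \<in> ?F")
    case True
    with that(3) have "t = v" using dist by (auto simp: doubleton_eq_iff split: if_splits)
    then show ?thesis using fv[of v] f by (simp add: good_labelling_def)
  next
    case False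
    then have "{y, t} \<in> ?E" "f {y, t} = 1" "t \<noteq> z" "t \<noteq> v" using that(2,3) by (auto simp: insert_commute)
    moreover have "fv ?E f y = 0" using that(1) fv[of y] dist by auto
    ultimately show ?thesis using f fv[of t] by (auto simp: good_labelling_def)
  qed
  have "0 < fv E ?f x" using fv[of x] f dist by (simp add: good_labelling_def)
  moreover have "pm_one E ?f"
    using f by (intro pm_one_override_on) (auto simp: good_labelling_def pm_one_def)
  moreover have "fG E ?f \<le> int (card V) - 1"
    using f fG_override_on[OF fin sub, of f ?g] ne simple_graph_edgeD(2)[OF sg vx]
      card_Diff_singleton_int[OF simple_graph_finite[OF sg]]
    by (simp add: good_labelling_def fG_def)
  ultimately show ?thesis using nonneg soft by (simp add: good_labelling_def)
qed

lemma good_labelling_4_cycle: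
  assumes sg: "simple_graph V E" and "{v, a} \<in> E" "{a, w} \<in> E" "{w, b} \<in> E" "{b, v} \<in> E"
    and "v \<noteq> w" "a \<noteq> b" and x: "x \<notin> {v, a, w, b}" and y: "y \<notin> {v, a, w, b}"
    and f: "good_labelling V (E - {{v, a}, {a, w}, {w, b}, {b, v}}) x y f"
  shows "good_labelling V E x y
    (override_on f (\<lambda>e. if e = {v, a} \<or> e = {w, b} then 1 else -1) {{v, a}, {a, w}, {w, b}, {b, v}})"
    (is "good_labelling V E x y ?f")
proof -
  let ?C = "{{v, a}, {a, w}, {w, b}, {b, v}}" and ?E = "E - {{v, a}, {a, w}, {w, b}, {b, v}}"
    and ?g = "\<lambda>e. if e = {v, a} \<or> e = {w, b} then 1 else (-1::int)"
  have fin: "finite E" by (rule simple_graph_finite_edges[OF sg])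
  have sub: "?C \<subseteq> E" using assms(2-5) by simp
  have "v \<noteq> a" "a \<noteq> w" "w \<noteq> b" "b \<noteq> v" using simple_graph_edgeD(1)[OF sg] assms(2-5) by blast+
  with \<open>v \<noteq> w\<close> \<open>a \<noteq> b\<close> have ne: "{v, a} \<noteq> {a, w}" "{v, a} \<noteq> {w, b}" "{v, a} \<noteq> {b, v}"
    "{a, w} \<noteq> {w, b}" "{a, w} \<noteq> {b, v}" "{w, b} \<noteq> {b, v}" and cycle: "fv ?C ?g t = 0" for t
    by (auto simp: doubleton_eq_iff)
  have fv: "fv E ?f t = fv ?E f t" for t using fv_override_on[OF fin sub] cycle by simp
  have "degree E x = degree ?E x" using degree_Diff[OF fin sub, of x] ne x by auto
  moreover have "{y, z} \<notin> ?C" for z using y by (auto simp: doubleton_eq_iff)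
  moreover have "fG E ?f = fG ?E f"
    using fG_override_on[OF fin sub, of f ?g] ne ne[symmetric] by (simp add: fG_def)
  moreover have "pm_one E ?f"
    using f by (intro pm_one_override_on) (auto simp: good_labelling_def pm_one_def)
  ultimately show ?thesis using f fv by (simp add: good_labelling_def)
qed

definition star_edges :: "'a set set \<Rightarrow> 'a \<Rightarrow> 'a \<Rightarrow> 'a set \<Rightarrow> 'a set set" where
  "star_edges E v y P = inc_edges E v \<union> (\<lambda>a. {y, a}) ` P"

text \<open>The edge \<open>va\<close> gets the sign \<open>\<tau> a\<close> and, for \<open>a \<in> P\<close>, the edge \<open>ya\<close> gets the
  opposite sign, so that the values at the vertices of \<open>P\<close> do not change.\<close>

definition star_labelling :: "'a \<Rightarrow> 'a \<Rightarrow> ('a \<Rightarrow> int) \<Rightarrow> 'a set \<Rightarrow> int" where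
  "star_labelling v y \<tau> e = (if v \<in> e then \<tau> (the_elem (e - {v})) else - \<tau> (the_elem (e - {y})))"

lemma inc_edges_subset_star_edges: "inc_edges E v \<subseteq> star_edges E v y P"
  by (simp add: star_edges_def)

lemma pm_one_star_labelling: "\<forall>u. \<tau> u = 1 \<or> \<tau> u = -1 \<Longrightarrow> pm_one F (star_labelling v y \<tau>)"
  by (auto simp: pm_one_def star_labelling_def)

lemma star_relabelling:
  assumes sg: "simple_graph V E" and "v \<noteq> y" and P: "P \<subseteq> neighbours E v \<inter> neighbours E y"
  shows "star_edges E v y P \<subseteq> E"
    and "fv (star_edges E v y P) (star_labelling v y \<tau>) w =
      (if w = v then (\<Sum>u\<in>neighbours E v. \<tau> u) else if w \<in> neighbours E v then \<tau> w else 0) +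
      (if w = y then - (\<Sum>a\<in>P. \<tau> a) else if w \<in> P then - \<tau> w else 0)"
    and "fv (star_edges E v y P) (\<lambda>_. 1) w =
      (if w = v then int (card (neighbours E v)) else if w \<in> neighbours E v then 1 else 0) +
      (if w = y then int (card P) else if w \<in> P then 1 else 0)"
    and "fG (star_edges E v y P) (star_labelling v y \<tau>) = (\<Sum>u\<in>neighbours E v. \<tau> u) - (\<Sum>a\<in>P. \<tau> a)"
proof -
  let ?N = "neighbours E v" and ?g = "star_labelling v y \<tau>"
  have fin: "finite ?N" "finite P" using finite_neighbours[OF sg] P finite_subset by auto
  have notin: "v \<notin> ?N" "y \<notin> P" "v \<notin> P" using self_notin_neighbours[OF sg] P by auto
  have star: "star_edges E v y P = (\<lambda>u. {v, u}) ` ?N \<union> (\<lambda>a. {y, a}) ` P"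
    by (simp add: star_edges_def inc_edges_eq_image[OF sg])
  have disj: "(\<lambda>u. {v, u}) ` ?N \<inter> (\<lambda>a. {y, a}) ` P = {}"
    using notin \<open>v \<noteq> y\<close> by (auto simp: doubleton_eq_iff)
  have g: "?g {v, u} = \<tau> u" if "u \<in> ?N" for u
    using that notin(1) by (auto simp: star_labelling_def insert_Diff_if)
  have g': "?g {y, a} = - \<tau> a" if "a \<in> P" for a
    using that notin \<open>v \<noteq> y\<close> by (auto simp: star_labelling_def insert_Diff_if)
  show "star_edges E v y P \<subseteq> E"
    using P by (auto simp: star_edges_def inc_edges_def neighbours_def)
  show "fv (star_edges E v y P) ?g w =
      (if w = v then (\<Sum>u\<in>?N. \<tau> u) else if w \<in> ?N then \<tau> w else 0) +
      (if w = y then - (\<Sum>a\<in>P. \<tau> a) else if w \<in> P then - \<tau> w else 0)"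
    unfolding star using fv_Un[OF _ _ disj] fin notin \<open>v \<noteq> y\<close>
    by (simp add: fv_fan g g' sum_negf cong: sum.cong)
  show "fv (star_edges E v y P) (\<lambda>_. 1) w =
      (if w = v then int (card ?N) else if w \<in> ?N then 1 else 0) +
      (if w = y then int (card P) else if w \<in> P then 1 else 0)"
    unfolding star using fv_Un[OF _ _ disj] fin notin by (simp add: fv_fan)
  have "sum ?g (star_edges E v y P) = (\<Sum>u\<in>?N. ?g {v, u}) + (\<Sum>a\<in>P. ?g {y, a})"
    unfolding star using fin disj
    by (simp add: sum.union_disjoint sum.reindex[OF inj_on_doubleton])
  then show "fG (star_edges E v y P) ?g = (\<Sum>u\<in>?N. \<tau> u) - (\<Sum>a\<in>P. \<tau> a)"
    by (simp add: fG_def g g' sum_negf cong: sum.cong)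
qed

lemma balanced_signs:
  assumes "finite P"
  obtains \<sigma> :: "'a \<Rightarrow> int" where "\<forall>u. \<sigma> u = 1 \<or> \<sigma> u = -1" "(\<Sum>a\<in>P. \<sigma> a) = - int (card P mod 2)"
proof -
  obtain B where B: "B \<subseteq> P" "card B = card P div 2"
    using obtain_subset_with_card_n[of "card P div 2" P] by auto
  define \<sigma> where "\<sigma> a = (if a \<in> B then 1 else -1 :: int)" for a
  have "(\<Sum>a\<in>P. \<sigma> a) = (\<Sum>a\<in>P - B. \<sigma> a) + (\<Sum>a\<in>B. \<sigma> a)"
    by (rule sum.subset_diff[OF B(1) assms])
  also have "\<dots> = (\<Sum>a\<in>P - B. -1) + (\<Sum>a\<in>B. 1)"
    by (intro arg_cong2[where f = "(+)"] sum.cong) (auto simp: \<sigma>_def)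
  also have "\<dots> = int (card B) - int (card P - card B)"
    using B(1) assms by (simp add: card_Diff_subset finite_subset)
  also have "\<dots> = - int (card P mod 2)" using B(2) by (simp add: of_nat_diff) presburger
  finally show thesis by (intro that[of \<sigma>]) (auto simp: \<sigma>_def)
qed

lemma balanced_star_labelling:
  assumes sg: "simple_graph V E" and "v \<noteq> y" and P: "P \<subseteq> neighbours E v \<inter> neighbours E y"
    and \<rho>: "\<forall>u. \<rho> u = 1 \<or> \<rho> u = -1"
  obtains g where "pm_one (star_edges E v y P) g"
    and "\<And>w. fv (star_edges E v y P) g w =
      (if w = v then (\<Sum>u\<in>neighbours E v - P. \<rho> u) - int (card P mod 2)
       else if w \<in> neighbours E v - P then \<rho> w else 0) +
      (if w = y then int (card P mod 2) else 0)"
    and "fG (star_edges E v y P) g = (\<Sum>u\<in>neighbours E v - P. \<rho> u)"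
proof -
  let ?N = "neighbours E v"
  have fin: "finite ?N" "finite P" using finite_neighbours[OF sg] P finite_subset by auto
  have "y \<notin> P" using P self_notin_neighbours[OF sg] by auto
  obtain \<sigma> where \<sigma>: "\<forall>u. \<sigma> u = 1 \<or> \<sigma> u = -1" "(\<Sum>a\<in>P. \<sigma> a) = - int (card P mod 2)"
    using balanced_signs[OF fin(2)] by blast
  define \<tau> where "\<tau> u = (if u \<in> P then \<sigma> u else \<rho> u)" for u
  have sum_P: "(\<Sum>a\<in>P. \<tau> a) = - int (card P mod 2)" using \<sigma>(2) by (simp add: \<tau>_def)
  have "(\<Sum>u\<in>?N. \<tau> u) = (\<Sum>u\<in>?N - P. \<tau> u) + (\<Sum>a\<in>P. \<tau> a)"
    using P fin by (simp add: sum.subset_diff)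
  then have sum_N: "(\<Sum>u\<in>?N. \<tau> u) = (\<Sum>u\<in>?N - P. \<rho> u) - int (card P mod 2)"
    using sum_P by (simp add: \<tau>_def)
  note S = star_relabelling[OF sg \<open>v \<noteq> y\<close> P]
  show thesis
  proof (rule that[of "star_labelling v y \<tau>"])
    show "pm_one (star_edges E v y P) (star_labelling v y \<tau>)"
      using \<sigma>(1) \<rho> by (intro pm_one_star_labelling) (simp add: \<tau>_def)
    show "fv (star_edges E v y P) (star_labelling v y \<tau>) w =
      (if w = v then (\<Sum>u\<in>?N - P. \<rho> u) - int (card P mod 2) else if w \<in> ?N - P then \<rho> w else 0) +
      (if w = y then int (card P mod 2) else 0)" for w
      using S(2)[of \<tau> w] sum_N sum_P \<open>y \<notin> P\<close> P self_notin_neighbours[OF sg] by (auto simp: \<tau>_def)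
    show "fG (star_edges E v y P) (star_labelling v y \<tau>) = (\<Sum>u\<in>?N - P. \<rho> u)"
      using S(4)[of \<tau>] sum_N sum_P by simp
  qed
qed

lemma good_labelling_star:
  assumes sg: "simple_graph V E" and vx: "{v, x} \<in> E" and "v \<noteq> y" "x \<noteq> y"
    and P: "P \<subseteq> neighbours E v \<inter> neighbours E y" "x \<notin> P"
    and \<rho>: "\<forall>u. \<rho> u = 1 \<or> \<rho> u = -1" "\<rho> x = 1" "(\<Sum>u\<in>neighbours E v - P. \<rho> u) = 1"
    and f: "good_labelling (V - {v}) (E - star_edges E v y P) s t f"
    and drop: "\<And>u. u \<in> neighbours E v - P \<Longrightarrow> u \<noteq> y \<Longrightarrow> \<rho> u = -1 \<Longrightarrow>
      0 < fv (E - star_edges E v y P) f u"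
    and at_y: "0 < fv (E - star_edges E v y P) f y + (if y \<in> neighbours E v then \<rho> y else 0)
      + int (card P mod 2)"
  shows "\<exists>f'. good_labelling V E x y f'"
proof -
  let ?N = "neighbours E v" and ?F = "star_edges E v y P" and ?E = "E - star_edges E v y P"
  have fin: "finite E" by (rule simple_graph_finite_edges[OF sg])
  have "v \<in> V" "v \<noteq> x" "x \<in> ?N" using simple_graph_edgeD[OF sg vx] vx by (auto simp: neighbours_def)
  have "y \<notin> P" "v \<notin> ?N" using P self_notin_neighbours[OF sg] by auto
  obtain g where g: "pm_one ?F g" "\<And>w. fv ?F g w =
      (if w = v then 1 - int (card P mod 2) else if w \<in> ?N - P then \<rho> w else 0) +
      (if w = y then int (card P mod 2) else 0)" "fG ?F g = 1"
    using balanced_star_labelling[OF sg \<open>v \<noteq> y\<close> P(1) \<rho>(1)] \<rho>(3) by metis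
  let ?f = "override_on f g ?F"
  have fv: "fv E ?f w = fv ?E f w + fv ?F g w" for w
    using fv_override_on[OF fin star_relabelling(1)[OF sg \<open>v \<noteq> y\<close> P(1)]] .
  have nonneg: "0 \<le> fv ?E f w" for w using f by (simp add: good_labelling_def)
  have pos_y: "0 < fv E ?f y" using fv[of y] g(2)[of y] at_y \<open>y \<notin> P\<close> \<open>v \<noteq> y\<close> by auto
  have "0 \<le> fv E ?f w" for w
  proof (cases "w = y")
    case False
    have "0 \<le> fv ?E f w + (if w \<in> ?N - P then \<rho> w else 0)"
      using drop[of w] nonneg[of w] \<rho>(1)[rule_format, of w] False by (cases "\<rho> w = 1") auto
    then show ?thesis using fv[of w] g(2)[of w] False \<open>v \<notin> ?N\<close> nonneg[of w] by auto
  qed (use pos_y in simp)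
  moreover have "0 < fv E ?f x"
    using fv[of x] g(2)[of x] nonneg[of x] P(2) \<rho>(2) \<open>v \<noteq> x\<close> \<open>x \<noteq> y\<close> \<open>x \<in> ?N\<close> by simp
  moreover have "pm_one E ?f"
    using f g(1) by (intro pm_one_override_on) (auto simp: good_labelling_def)
  moreover have "fG E ?f \<le> int (card V) - 1"
    using f fG_override_on[OF fin star_relabelling(1)[OF sg \<open>v \<noteq> y\<close> P(1)]] g(3)
      card_Diff_singleton_int[OF simple_graph_finite[OF sg] \<open>v \<in> V\<close>]
    by (simp add: good_labelling_def)
  ultimately show ?thesis using good_labelling_if_positive[OF fin] pos_y by blast
qed

lemma good_labelling_star_through_y:
  assumes sg: "simple_graph V E" and vx: "{v, x} \<in> E" and vy: "{v, y} \<in> E" and "x \<noteq> y"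
    and b: "b \<in> neighbours E v" "b \<noteq> x" "b \<noteq> y" "2 \<le> degree E b"
    and Py: "neighbours E v - {x, y, b} \<subseteq> neighbours E y"
    and f: "good_labelling (V - {v}) (E - star_edges E v y (neighbours E v - {x, y, b})) b b f"
  shows "\<exists>f'. good_labelling V E x y f'"
proof -
  define P where "P = neighbours E v - {x, y, b}"
  let ?\<rho> = "\<lambda>u. if u = b then -1 else 1 :: int"
  have "v \<noteq> y" using simple_graph_edgeD[OF sg vy] by simp
  have "neighbours E v - P = {x, y, b}" using vx vy b by (auto simp: P_def neighbours_def)
  then have sum: "(\<Sum>u\<in>neighbours E v - P. ?\<rho> u) = 1" using b \<open>x \<noteq> y\<close> by simp
  have P: "P \<subseteq> neighbours E v \<inter> neighbours E y" "x \<notin> P" using Py by (auto simp: P_def)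
  note S = star_relabelling[OF sg \<open>v \<noteq> y\<close> P(1)]
  have "int (degree E b) = int (degree (E - star_edges E v y P) b) + 1"
    using degree_Diff[OF simple_graph_finite_edges[OF sg] S(1), of b] S(3)[of b] b \<open>v \<noteq> y\<close>
      self_notin_neighbours[OF sg] by (auto simp: P_def)
  then have "0 < fv (E - star_edges E v y P) f b" using f b(4) by (simp add: good_labelling_def P_def)
  moreover have "0 \<le> fv (E - star_edges E v y P) f y" using f by (simp add: good_labelling_def P_def)
  moreover have "y \<in> neighbours E v" using vy by (simp add: neighbours_def)
  ultimately show ?thesis
  proof (intro good_labelling_star[where \<rho> = ?\<rho>, OF sg vx \<open>v \<noteq> y\<close> \<open>x \<noteq> y\<close> P _ _ sum f[folded P_def]])
    show "0 < fv (E - star_edges E v y P) f u" if "?\<rho> u = -1" for u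
      using that \<open>0 < fv (E - star_edges E v y P) f b\<close> by (auto split: if_splits)
  qed (use b in auto)
qed

lemma good_labelling_star_avoiding_y:
  assumes sg: "simple_graph V E" and vx: "{v, x} \<in> E" and vy: "{v, y} \<notin> E" and "v \<noteq> y"
    and Py: "neighbours E v - {x} \<subset> neighbours E y"
    and f: "good_labelling (V - {v}) (E - star_edges E v y (neighbours E v - {x})) y y f"
  shows "\<exists>f'. good_labelling V E x y f'"
proof -
  define P where "P = neighbours E v - {x}"
  let ?E = "E - star_edges E v y P"
  have "x \<noteq> y" "y \<notin> neighbours E v" using vx vy by (auto simp: neighbours_def insert_commute)
  have "neighbours E v - P = {x}" using vx by (auto simp: P_def neighbours_def)
  then have sum: "(\<Sum>u\<in>neighbours E v - P. 1) = (1::int)" by simp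
  have P: "P \<subseteq> neighbours E v \<inter> neighbours E y" "x \<notin> P" using Py by (auto simp: P_def)
  note S = star_relabelling[OF sg \<open>v \<noteq> y\<close> P(1)]
  have "card P < card (neighbours E y)"
    using Py finite_neighbours[OF sg] by (simp add: P_def psubset_card_mono)
  moreover have "int (degree E y) = int (degree ?E y) + int (card P)"
    using degree_Diff[OF simple_graph_finite_edges[OF sg] S(1), of y] S(3)[of y] P
      \<open>y \<notin> neighbours E v\<close> \<open>v \<noteq> y\<close> by auto
  ultimately have "0 < degree ?E y" using degree_eq_card_neighbours[OF sg, of y] by linarith
  then have "0 < fv ?E f y" using f by (simp add: good_labelling_def P_def)
  then show ?thesis
    using good_labelling_star[where \<rho> = "\<lambda>_. 1", OF sg vx \<open>v \<noteq> y\<close> \<open>x \<noteq> y\<close> P _ _ sum f[folded P_def]]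
      \<open>y \<notin> neighbours E v\<close> by auto
qed

section \<open>Existence of good labellings\<close>

lemma good_labelling_common_neighbour:
  assumes sg: "simple_graph V E" and md: "\<forall>u\<in>V. 2 \<le> degree E u"
    and IH: "\<And>v F s t. v \<in> V \<Longrightarrow> inc_edges E v \<subseteq> F \<Longrightarrow>
      \<exists>f. good_labelling (V - {v}) (E - F) s t f"
    and vx: "{v, x} \<in> E" and vy: "{v, y} \<in> E" and "x \<noteq> y" and "{x, y} \<notin> E"
    and Py: "neighbours E v - {x, y} \<subseteq> neighbours E y"
  shows "\<exists>f. good_labelling V E x y f"
proof (cases "neighbours E v - {x, y} = {}")
  case True
  have "v \<in> V" "y \<in> V" "v \<noteq> y" using simple_graph_edgeD[OF sg vy] by auto
  have "neighbours E v = {x, y}" using True vx vy by (auto simp: neighbours_def)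
  then have inc: "inc_edges E v = {{v, x}, {v, y}}" by (simp add: inc_edges_eq_image[OF sg])
  obtain z where yz: "{y, z} \<in> E" "z \<noteq> v" using md \<open>y \<in> V\<close> degree_ge_2_other_neighbour[OF sg] by blast
  have "z \<noteq> x" using yz(1) \<open>{x, y} \<notin> E\<close> by (auto simp: insert_commute)
  have "2 \<le> degree E z" using md simple_graph_edgeD(3)[OF sg yz(1)] by blast
  obtain f where "good_labelling (V - {v}) (E - {{v, x}, {v, y}, {y, z}}) z y f"
    using IH[OF \<open>v \<in> V\<close>, of "{{v, x}, {v, y}, {y, z}}" z y] inc vx vy yz by auto
  then show ?thesis
    using good_labelling_degree_two[OF sg vx vy yz(1) yz(2) \<open>z \<noteq> x\<close> \<open>x \<noteq> y\<close> \<open>2 \<le> degree E z\<close>] by blast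
next
  case False
  then obtain b where b: "b \<in> neighbours E v" "b \<noteq> x" "b \<noteq> y" by blast
  have "v \<in> V" "v \<noteq> y" using simple_graph_edgeD[OF sg vy] by auto
  have "2 \<le> degree E b" using md b(1) neighbours_subset[OF sg] by blast
  obtain f where "good_labelling (V - {v}) (E - star_edges E v y (neighbours E v - {x, y, b})) b b f"
    using IH[OF \<open>v \<in> V\<close> inc_edges_subset_star_edges] by blast
  then show ?thesis using good_labelling_star_through_y[OF sg vx vy \<open>x \<noteq> y\<close> b \<open>2 \<le> degree E b\<close>] Py
    by blast
qed

lemma good_labelling_or_twin:
  assumes sg: "simple_graph V E" and md: "\<forall>u\<in>V. 2 \<le> degree E u"
    and IH_edges: "\<And>F s t. F \<subseteq> E \<Longrightarrow> F \<noteq> {} \<Longrightarrow> \<exists>f. good_labelling V (E - F) s t f"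
    and IH_vertex: "\<And>v F s t. v \<in> V \<Longrightarrow> inc_edges E v \<subseteq> F \<Longrightarrow>
      \<exists>f. good_labelling (V - {v}) (E - F) s t f"
    and "x \<noteq> y" "{x, y} \<notin> E" "even (degree E x)" and vx: "{v, x} \<in> E"
  shows "(\<exists>f. good_labelling V E x y f) \<or> neighbours E v - {x} = neighbours E y"
proof (cases "\<exists>a\<in>neighbours E v - {x, y}. {y, a} \<notin> E")
  case True
  then obtain a where a: "{v, a} \<in> E" "a \<noteq> x" "a \<noteq> y" "{y, a} \<notin> E" by (auto simp: neighbours_def)
  have "v \<noteq> y" "v \<noteq> x" using vx \<open>{x, y} \<notin> E\<close> simple_graph_edgeD(1)[OF sg vx] by (auto simp: insert_commute)
  have "2 \<le> degree E a" using md simple_graph_edgeD(3)[OF sg a(1)] by blast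
  obtain f where "good_labelling V (E - {{v, a}, {v, x}}) a y f" using IH_edges[of "{{v, a}, {v, x}}"] a vx by auto
  from good_labelling_path[OF sg vx a(1) a(2)[symmetric] \<open>2 \<le> degree E a\<close> \<open>even (degree E x)\<close> _ this]
  show ?thesis using a \<open>v \<noteq> y\<close> \<open>x \<noteq> y\<close> by auto
next
  case False
  then have Py: "neighbours E v - {x, y} \<subseteq> neighbours E y" by (auto simp: neighbours_def)
  show ?thesis
  proof (cases "{v, y} \<in> E")
    case True
    with good_labelling_common_neighbour[OF sg md IH_vertex vx _ \<open>x \<noteq> y\<close> \<open>{x, y} \<notin> E\<close> Py]
    show ?thesis by blast
  next
    case vy: False
    have "v \<in> V" "v \<noteq> y" using simple_graph_edgeD[OF sg vx] \<open>{x, y} \<notin> E\<close> vx by (auto simp: insert_commute)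
    have Py': "neighbours E v - {x} \<subseteq> neighbours E y" using Py vy by (auto simp: neighbours_def)
    obtain f where f: "good_labelling (V - {v}) (E - star_edges E v y (neighbours E v - {x})) y y f"
      using IH_vertex[OF \<open>v \<in> V\<close> inc_edges_subset_star_edges] by blast
    show ?thesis
    proof (cases "neighbours E v - {x} = neighbours E y")
      case False
      with Py' have "neighbours E v - {x} \<subset> neighbours E y" by blast
      then show ?thesis using good_labelling_star_avoiding_y[OF sg vx vy \<open>v \<noteq> y\<close> _ f] by blast
    qed simp
  qed
qed

lemma good_labelling_twins:
  assumes sg: "simple_graph V E"
    and xv: "{x, v} \<in> E" "{x, v'} \<in> E" "v \<noteq> v'" and "{x, y} \<notin> E" and "2 \<le> degree E y"
    and twin: "neighbours E v - {x} = neighbours E y" "neighbours E v' - {x} = neighbours E y"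
    and IH: "\<And>F s t. F \<subseteq> E \<Longrightarrow> F \<noteq> {} \<Longrightarrow> \<exists>f. good_labelling V (E - F) s t f"
  shows "\<exists>f. good_labelling V E x y f"
proof -
  obtain a where ya: "{y, a} \<in> E" using degree_ge_2_other_neighbour[OF sg \<open>2 \<le> degree E y\<close>] by blast
  obtain a' where ya': "{y, a'} \<in> E" "a' \<noteq> a"
    using degree_ge_2_other_neighbour[OF sg \<open>2 \<le> degree E y\<close>] by blast
  have a: "a \<in> neighbours E y" "a' \<in> neighbours E y" using ya ya' by (simp_all add: neighbours_def)
  have "x \<noteq> a" "x \<noteq> a'" "y \<noteq> v" "y \<noteq> v'" using ya ya' xv \<open>{x, y} \<notin> E\<close> by (auto simp: insert_commute)
  moreover have "x \<noteq> v" "x \<noteq> v'" "y \<noteq> a" "y \<noteq> a'"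
    using simple_graph_edgeD(1)[OF sg] xv ya ya' by blast+
  moreover have C: "{v, a} \<in> E" "{a, v'} \<in> E" "{v', a'} \<in> E" "{a', v} \<in> E"
    using a twin by (auto simp: neighbours_def insert_commute)
  moreover obtain f where
    "good_labelling V (E - {{v, a}, {a, v'}, {v', a'}, {a', v}}) x y f"
    using IH[of "{{v, a}, {a, v'}, {v', a'}, {a', v}}" x y] C by auto
  ultimately show ?thesis
    using good_labelling_4_cycle[OF sg C \<open>v \<noteq> v'\<close> ya'(2)[symmetric]] by blast
qed

lemma good_labelling_even_distinct:
  assumes sg: "simple_graph V E" and md: "\<forall>u\<in>V. 2 \<le> degree E u"
    and IH_edges: "\<And>F s t. F \<subseteq> E \<Longrightarrow> F \<noteq> {} \<Longrightarrow> \<exists>f. good_labelling V (E - F) s t f"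
    and IH_vertex: "\<And>v F s t. v \<in> V \<Longrightarrow> inc_edges E v \<subseteq> F \<Longrightarrow>
      \<exists>f. good_labelling (V - {v}) (E - F) s t f"
    and "x \<in> V" "y \<in> V" "x \<noteq> y" "even (degree E x)"
  shows "\<exists>f. good_labelling V E x y f"
proof (cases "{x, y} \<in> E")
  case True
  then have yx: "{y, x} \<in> E" by (simp add: insert_commute)
  obtain a where ya: "{y, a} \<in> E" "a \<noteq> x"
    using md \<open>y \<in> V\<close> degree_ge_2_other_neighbour[OF sg] by blast
  have "2 \<le> degree E a" using md simple_graph_edgeD(3)[OF sg ya(1)] by blast
  obtain f where "good_labelling V (E - {{y, a}, {y, x}}) a y f"
    using IH_edges[of "{{y, a}, {y, x}}" a y] yx ya by auto
  then show ?thesis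
    using good_labelling_path[OF sg yx ya(1) ya(2)[symmetric] \<open>2 \<le> degree E a\<close> \<open>even (degree E x)\<close>]
    by blast
next
  case nxy: False
  obtain v where xv: "{x, v} \<in> E" using md \<open>x \<in> V\<close> degree_ge_2_other_neighbour[OF sg] by blast
  obtain v' where xv': "{x, v'} \<in> E" "v' \<noteq> v"
    using md \<open>x \<in> V\<close> degree_ge_2_other_neighbour[OF sg] by blast
  have vx: "{v, x} \<in> E" "{v', x} \<in> E" using xv xv' by (simp_all add: insert_commute)
  have or_twin: "(\<exists>f. good_labelling V E x y f) \<or> neighbours E u - {x} = neighbours E y"
    if "{u, x} \<in> E" for u
    using good_labelling_or_twin[OF sg md IH_edges IH_vertex \<open>x \<noteq> y\<close> nxy \<open>even (degree E x)\<close>] that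
    by blast
  show ?thesis
  proof (cases "\<exists>f. good_labelling V E x y f")
    case False
    then have "neighbours E v - {x} = neighbours E y" "neighbours E v' - {x} = neighbours E y"
      using or_twin vx by blast+
    moreover have "2 \<le> degree E y" using md \<open>y \<in> V\<close> by blast
    ultimately show ?thesis
      using good_labelling_twins[OF sg xv xv'(1) xv'(2)[symmetric] nxy _ _ _ IH_edges] by blast
  qed
qed

lemma good_labelling_min_degree:
  fixes V :: "'a set"
  assumes sg: "simple_graph V E" and "E \<noteq> {}" and md: "\<forall>u\<in>V. 2 \<le> degree E u"
    and IH: "\<And>(V' :: 'a set) E' s t. simple_graph V' E' \<Longrightarrow> V' \<noteq> {} \<Longrightarrow> card V' + card E' < card V + card E \<Longrightarrow>
      \<exists>f. good_labelling V' E' s t f"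
  shows "\<exists>f. good_labelling V E x y f"
proof -
  have fin: "finite V" "finite E" using sg simple_graph_finite simple_graph_finite_edges by auto
  obtain e where "e \<in> E" using \<open>E \<noteq> {}\<close> by blast
  then obtain p q where pq: "p \<in> V" "q \<in> V" "p \<noteq> q" using sg by (metis simple_graph_edgeE)
  have IH_edges: "\<exists>f. good_labelling V (E - F) s t f" if "F \<subseteq> E" "F \<noteq> {}" for F s t
  proof -
    have "card (E - F) < card E" using that fin(2) by (intro psubset_card_mono) auto
    then show ?thesis using IH[OF simple_graph_Diff[OF sg]] pq by auto
  qed
  have IH_vertex: "\<exists>f. good_labelling (V - {v}) (E - F) s t f"
    if "v \<in> V" "inc_edges E v \<subseteq> F" for v F s t
  proof -
    have "V - {v} \<noteq> {}" using pq by auto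
    then show ?thesis
      using IH[OF simple_graph_delete_vertex[OF sg that(2)]] card_delete_vertex_less[OF fin that(1)] by auto
  qed
  show ?thesis
  proof (cases "x \<noteq> y \<and> x \<in> V \<and> y \<in> V \<and> even (degree E x)")
    case True
    then show ?thesis using good_labelling_even_distinct[OF sg md IH_edges IH_vertex] by blast
  next
    case False
    define b where "b = (if y \<in> V \<and> even (degree E y) then y else if x \<in> V \<and> even (degree E x) then x else p)"
    have "b \<in> V" using pq by (simp add: b_def)
    moreover have "odd (degree E w)" if "w \<in> {x, y}" "w \<in> V" "w \<noteq> b" for w
      using False that by (auto simp: b_def split: if_splits)
    ultimately show ?thesis using good_labelling_odd_except[OF sg md _ IH_edges] by blast
  qed
qed

theorem good_labelling_exists:
  assumes "simple_graph V E" "V \<noteq> {}"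
  shows "\<exists>f. good_labelling V E x y f"
  using assms
proof (induction V E arbitrary: x y rule: simple_graph_induct)
  case (edgeless V)
  then show ?case by (blast intro: good_labelling_edgeless)
next
  case (isolated V E u)
  then obtain f where "good_labelling (V - {u}) E x y f" by blast
  then show ?case using good_labelling_isolated[OF isolated(1,2)] by blast
next
  case (leaf V E u w)
  then obtain f where "good_labelling (V - {u}) (E - {{u, w}}) x y f" by blast
  then show ?case using good_labelling_leaf[OF leaf(1,2)] by blast
next
  case (min_degree V E)
  then show ?case using good_labelling_min_degree[OF min_degree(1-3)] by blast
qed

theorem proposition5p1:
  fixes V :: "'a set" and E :: "'a set set"
  assumes "simple_graph V E"
    and "v_even V E = 2"
  shows "(\<exists>f\<in>SEDF0 V E. fG E f \<le> int (card V) - 1)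
         \<and> gamma_s' E \<le> int (card V) - 1"
proof -
  obtain x y where xy: "{v \<in> V. even (degree E v)} = {x, y}"
    using assms(2) by (auto simp: v_even_def card_2_iff)
  then have odd: "\<forall>w\<in>V - {x, y}. odd (degree E w)" and "V \<noteq> {}" by auto
  obtain f where f: "good_labelling V E x y f" using good_labelling_exists[OF assms(1) \<open>V \<noteq> {}\<close>] by blast
  have "f \<in> SEDF0 V E" using good_labelling_SEDF0[OF assms(1) odd f] .
  moreover have "gamma_s' E \<le> fG E f"
    using gamma_s'_le SEDF0_imp_is_SEDF[OF assms(1) \<open>f \<in> SEDF0 V E\<close>] simple_graph_finite_edges[OF assms(1)]
    by blast
  moreover have "fG E f \<le> int (card V) - 1" using f by (simp add: good_labelling_def)
  ultimately show ?thesis by fastforce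
qed

end
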